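(* The smallest constant $\sigma_{2,0}$ such that $\|f-P_2(f)\|_{C^0}\le\sigma_{2,0}\|f'\|_{C^0}$ for all $f\in C^1([-1,1],\mathbb{C})$ equals $$\frac{14\sqrt7-20}{27}\ (\approx0.6311).$$ Equivalently, with the notation below, $\max_{t\in[-1,1],y\in\Omega_2}\max\big(\overline{\varphi}_2(y)(t)-P_2(y)(t),\,P_2(y)(t)-\underline{\varphi}_2(y)(t)\big)=\frac{14\sqrt7-20}{27}$.
   Context: $P_2$ maps a continuous function on $[-1,1]$ to its polynomial interpolant of degree $\le2$ at the Chebyshev points $t_0=1,t_1=0,t_2=-1$; for $y\in\mathbb{R}^3$, $P_2(y)$ is the polynomial of degree $\le2$ with $P_2(y)(t_k)=y_k$. $\|\cdot\|_{C^0}$ is the sup norm on $[-1,1]$. $\Omega_2=\{y\in\mathbb{R}^3:|y_k|\le|t_k|,\ |y_{k+1}-y_k|\le|t_{k+1}-t_k|\}$. For $y\in\Omega_2$ and $t$ between $t_{k^*}$ and $t_{k^*+1}$: $\overline{\varphi}_2(y)(t)=\min\{y_{k^*}+t-t_{k^*},\,y_{k^*+1}-t+t_{k^*+1},\,|t|\}$ and $\underline{\varphi}_2(y)(t)=\max\{y_{k^*}-t+t_{k^*},\,y_{k^*+1}+t-t_{k^*+1},\,-|t|\}$. *)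

theory Defs
  imports "HOL-Analysis.Analysis"
begin

definition cheb2 :: "nat \<Rightarrow> real" where
  "cheb2 k = (if k = 0 then 1 else if k = 1 then 0 else -1)"

definition P2 :: "(real \<Rightarrow> complex) \<Rightarrow> real \<Rightarrow> complex" where
  "P2 f t = (\<Sum>k<3. f (cheb2 k) *
      complex_of_real (\<Prod>j\<in>{..<3} - {k}. (t - cheb2 j) / (cheb2 k - cheb2 j)))"

definition sup_norm :: "(real \<Rightarrow> complex) \<Rightarrow> real" where
  "sup_norm g = (SUP t\<in>{-1..1}. norm (g t))"

definition C1_on_interval :: "(real \<Rightarrow> complex) \<Rightarrow> (real \<Rightarrow> complex) \<Rightarrow> bool" where
  "C1_on_interval f f' \<longleftrightarrow>
     (\<forall>t\<in>{-1..1}. (f has_vector_derivative f' t) (at t within {-1..1})) \<and>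
     continuous_on {-1..1} f'"

end

theory Submission
  imports Defs
begin

text \<open>
  Upper bound: for \<open>0 \<le> t \<le> 1\<close> the interpolation error \<open>f t - P2 f t\<close> is a combination of
  \<open>f t - f 0\<close>, \<open>f 1 - f t\<close> and \<open>f 0 - f (-1)\<close> with nonnegative weights, so
  \<open>\<bar>f t - P2 f t\<bar> \<le> (2t - t\<^sup>2 - t\<^sup>3) \<parallel>f'\<parallel>\<close>; negative \<open>t\<close> is symmetric.
  The cubic attains its maximum \<open>(14\<surd>7 - 20)/27\<close> on \<open>[0,1]\<close> at \<open>a = (\<surd>7 - 1)/3\<close>.
  Lower bound: the tent \<open>s \<mapsto> \<bar>s\<bar> - \<bar>s - a\<bar> - s + a\<close> (slopes \<open>-1, 1, -1\<close>) has exactly this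
  error at \<open>a\<close>; replacing \<open>\<bar>x\<bar>\<close> by \<open>\<surd>(x\<^sup>2 + e\<^sup>2)\<close> yields \<open>C\<^sup>1\<close> functions with \<open>\<parallel>f'\<parallel> \<le> 1\<close>
  whose error tends to the same value.
\<close>

lemma P2_eq:
  "P2 f t = f 1 * of_real (t * (t + 1) / 2) + f 0 * of_real (1 - t\<^sup>2) + f (-1) * of_real (t * (t - 1) / 2)"
proof -
  have "{..<3::nat} = {0, 1, 2}" "{..<3::nat} - {0} = {1, 2}" "{..<3::nat} - {1} = {0, 2}"
    "{..<3::nat} - {2} = {0, 1}" by auto
  then show ?thesis
    unfolding P2_def by (simp add: cheb2_def power2_eq_square field_simps)
qed

lemma P2_minus:
  "P2 f (-s) = f (-1) * of_real (s * (s + 1) / 2) + f 0 * of_real (1 - s\<^sup>2) + f 1 * of_real (s * (s - 1) / 2)"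
  unfolding P2_eq by (simp add: algebra_simps)

lemma P2_diff: "P2 (\<lambda>s. f s - g s) t = P2 f t - P2 g t"
  unfolding P2_eq left_diff_distrib by (simp add: algebra_simps del: of_real_mult of_real_divide of_real_diff of_real_add)

lemma continuous_on_P2: "continuous_on S (P2 f)"
  unfolding P2_eq[abs_def] by (intro continuous_intros) auto

lemma sup_norm_upper:
  assumes "continuous_on {-1..1} g" "t \<in> {-1..1}"
  shows "norm (g t) \<le> sup_norm g"
proof -
  have "compact ((\<lambda>t. norm (g t)) ` {-1..1})"
    by (intro compact_continuous_image continuous_on_norm assms) simp
  then show ?thesis
    unfolding sup_norm_def using assms(2) by (intro cSUP_upper bounded_imp_bdd_above compact_imp_bounded)
qed

lemma sup_norm_le: "(\<And>t. t \<in> {-1..1} \<Longrightarrow> norm (g t) \<le> B) \<Longrightarrow> sup_norm g \<le> B"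
  unfolding sup_norm_def by (rule cSUP_least) auto

lemma C1_on_interval_continuous: "C1_on_interval f f' \<Longrightarrow> continuous_on {-1..1} f"
  unfolding C1_on_interval_def continuous_on_eq_continuous_within
  using has_vector_derivative_continuous by blast

lemma norm_diff_le_derivative_bound:
  fixes f :: "real \<Rightarrow> 'a::real_normed_vector"
  assumes "convex S" "\<And>s. s \<in> S \<Longrightarrow> (f has_vector_derivative f' s) (at s within S)"
    "\<And>s. s \<in> S \<Longrightarrow> norm (f' s) \<le> M" "x \<in> S" "y \<in> S"
  shows "norm (f x - f y) \<le> M * \<bar>x - y\<bar>"
proof -
  have "norm (f x - f y) \<le> M * norm (x - y)"
  proof (rule differentiable_bound[of S f "\<lambda>s h. h *\<^sub>R f' s"])
    show "(f has_derivative (\<lambda>h. h *\<^sub>R f' s)) (at s within S)" if "s \<in> S" for s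
      using assms(2)[OF that] by (simp add: has_vector_derivative_def)
    show "onorm (\<lambda>h. h *\<^sub>R f' s) \<le> M" if "s \<in> S" for s
      using onorm_scaleR_left[OF bounded_linear_ident, of "f' s"] assms(3)[OF that] by (simp add: onorm_id)
  qed (use assms in auto)
  then show ?thesis by simp
qed

lemma cubic_gap_eq:
  "(14 * sqrt 7 - 20) / 27 - (2 * t - t\<^sup>2 - t ^ 3) = (t - (sqrt 7 - 1) / 3)\<^sup>2 * (t + (2 * sqrt 7 + 1) / 3)"
proof -
  have "sqrt 7 * sqrt 7 = 7" by simp
  then show ?thesis
    by (simp add: field_simps power2_eq_square power3_eq_cube)
qed

lemma cubic_le_sigma:
  assumes "0 \<le> t"
  shows "2 * t - t\<^sup>2 - t ^ 3 \<le> (14 * sqrt 7 - 20) / 27"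
proof -
  have "0 \<le> (t - (sqrt 7 - 1) / 3)\<^sup>2 * (t + (2 * sqrt 7 + 1) / 3)"
    using assms by (intro mult_nonneg_nonneg) auto
  then show ?thesis using cubic_gap_eq[of t] by linarith
qed

lemma interpolation_error_bound:
  fixes p a b q :: complex
  assumes t: "0 \<le> t" "t \<le> 1"
    and "norm (a - b) \<le> M * t" "norm (p - a) \<le> M * (1 - t)" "norm (b - q) \<le> M"
  shows "norm (a - (p * of_real (t * (t + 1) / 2) + b * of_real (1 - t\<^sup>2) + q * of_real (t * (t - 1) / 2)))
    \<le> M * (2 * t - t\<^sup>2 - t ^ 3)"
proof -
  define w where "w = t * (t + 1) / 2"
  define v where "v = t * (1 - t) / 2"
  have w: "0 \<le> w" "w \<le> 1"
    using mult_mono[of t 1 "t + 1" 2] t unfolding w_def by auto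
  have v: "0 \<le> v" using t unfolding v_def by simp
  have "a - (p * of_real (t * (t + 1) / 2) + b * of_real (1 - t\<^sup>2) + q * of_real (t * (t - 1) / 2))
      = of_real (1 - w) * (a - b) - of_real w * (p - a) - of_real v * (b - q)"
    unfolding w_def v_def by (simp add: field_simps power2_eq_square)
  also have "norm \<dots> \<le> (1 - w) * norm (a - b) + w * norm (p - a) + v * norm (b - q)"
    using w v by (smt (verit) norm_mult norm_of_real norm_triangle_ineq4)
  also have "\<dots> \<le> (1 - w) * (M * t) + w * (M * (1 - t)) + v * M"
    using w v assms by (intro add_mono mult_left_mono) auto
  also have "\<dots> = M * (2 * t - t\<^sup>2 - t ^ 3)"
    unfolding w_def v_def by (simp add: field_simps power2_eq_square power3_eq_cube)
  finally show ?thesis .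
qed

lemma P2_error_bound:
  assumes f: "C1_on_interval f f'" and t: "t \<in> {-1..1}"
    and f'_bound: "\<And>s. s \<in> {-1..1} \<Longrightarrow> norm (f' s) \<le> M"
  shows "norm (f t - P2 f t) \<le> (14 * sqrt 7 - 20) / 27 * M"
proof -
  have M: "0 \<le> M" using order_trans[OF norm_ge_zero f'_bound[of 0]] by simp
  have lip: "norm (f x - f y) \<le> M * \<bar>x - y\<bar>" if "x \<in> {-1..1}" "y \<in> {-1..1}" for x y
    using f that f'_bound unfolding C1_on_interval_def
    by (intro norm_diff_le_derivative_bound[of "{-1..1}" f f']) auto
  obtain s where s: "0 \<le> s" and err: "norm (f t - P2 f t) \<le> M * (2 * s - s\<^sup>2 - s ^ 3)"
  proof (cases "0 \<le> t")
    case True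
    have "norm (f t - P2 f t) \<le> M * (2 * t - t\<^sup>2 - t ^ 3)"
      unfolding P2_eq
      by (rule interpolation_error_bound) (use True t lip[of t 0] lip[of 1 t] lip[of 0 "-1"] in auto)
    with True show ?thesis by (rule that)
  next
    case False
    have "norm (f t - P2 f (- (- t))) \<le> M * (2 * (- t) - (- t)\<^sup>2 - (- t) ^ 3)"
      unfolding P2_minus
      by (rule interpolation_error_bound) (use False t lip[of t 0] lip[of "-1" t] lip[of 0 1] in \<open>auto simp: add.commute\<close>)
    with False show ?thesis by (intro that[of "- t"]) auto
  qed
  note err
  also have "M * (2 * s - s\<^sup>2 - s ^ 3) \<le> M * ((14 * sqrt 7 - 20) / 27)"
    using cubic_le_sigma[OF s] M by (rule mult_left_mono)
  finally show ?thesis by (simp add: mult.commute)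
qed

lemma norm_interpolation_error_le:
  assumes t: "t \<in> {-1..1}" and h: "\<And>s. s \<in> {-1..1} \<Longrightarrow> norm (h s) \<le> B"
  shows "norm (h t - P2 h t) \<le> 4 * B"
proof -
  have "\<bar>t\<bar> * \<bar>t + 1\<bar> \<le> 1 * 2" "\<bar>t\<bar> * \<bar>t - 1\<bar> \<le> 1 * 2"
    using t by (intro mult_mono; auto)+
  moreover have "t\<^sup>2 \<le> 1" using t by (simp add: abs_square_le_1 abs_le_iff)
  ultimately have w: "\<bar>t * (t + 1) / 2\<bar> \<le> 1" "\<bar>1 - t\<^sup>2\<bar> \<le> 1" "\<bar>t * (t - 1) / 2\<bar> \<le> 1"
    by (auto simp: abs_mult)
  have "norm (h t - P2 h t) \<le> norm (h t) + norm (h 1) * \<bar>t * (t + 1) / 2\<bar>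
      + norm (h 0) * \<bar>1 - t\<^sup>2\<bar> + norm (h (-1)) * \<bar>t * (t - 1) / 2\<bar>"
    unfolding P2_eq by (smt (verit) norm_mult norm_of_real norm_triangle_ineq norm_triangle_ineq4)
  also have "\<dots> \<le> B + B * 1 + B * 1 + B * 1"
    using t h[of 1] h[of 0] h[of "-1"] w order_trans[OF norm_ge_zero h[of 0]]
    by (intro add_mono mult_mono h) auto
  finally show ?thesis by simp
qed

definition smooth_abs :: "real \<Rightarrow> real \<Rightarrow> real" where
  "smooth_abs e x = sqrt (x\<^sup>2 + e\<^sup>2)"

lemma smooth_abs_pos: "e > 0 \<Longrightarrow> smooth_abs e x > 0"
  unfolding smooth_abs_def by (simp add: add_nonneg_pos)

lemma has_real_derivative_smooth_abs [derivative_intros]: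
  assumes "e > 0" "(f has_real_derivative f') (at x within S)"
  shows "((\<lambda>x. smooth_abs e (f x)) has_real_derivative f x / smooth_abs e (f x) * f') (at x within S)"
proof -
  have "(f x)\<^sup>2 + e\<^sup>2 > 0" using assms(1) by (simp add: add_nonneg_pos)
  then show ?thesis unfolding smooth_abs_def using assms(2)
    by (auto intro!: derivative_eq_intros simp: field_simps)
qed

lemma smooth_abs_bounds:
  assumes "e \<ge> 0"
  shows "\<bar>x\<bar> \<le> smooth_abs e x" "smooth_abs e x \<le> \<bar>x\<bar> + e"
proof -
  show "\<bar>x\<bar> \<le> smooth_abs e x"
    unfolding smooth_abs_def by (rule real_le_rsqrt) simp
  have "x\<^sup>2 + e\<^sup>2 \<le> (\<bar>x\<bar> + e)\<^sup>2" using assms by (simp add: power2_eq_square algebra_simps)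
  then show "smooth_abs e x \<le> \<bar>x\<bar> + e"
    unfolding smooth_abs_def using real_sqrt_le_mono assms by fastforce
qed

lemma abs_divide_smooth_abs_le_1: "e > 0 \<Longrightarrow> \<bar>x / smooth_abs e x\<bar> \<le> 1"
  using smooth_abs_bounds(1)[of e x] smooth_abs_pos[of e x] by (simp add: abs_div divide_le_eq_1)

lemma mono_divide_smooth_abs:
  assumes e: "e > 0" and "x \<le> y"
  shows "x / smooth_abs e x \<le> y / smooth_abs e y"
proof -
  have nonneg: "x / smooth_abs e x \<le> y / smooth_abs e y" if "0 \<le> x" "x \<le> y" for x y
  proof -
    have "x\<^sup>2 \<le> y\<^sup>2" using that by (intro power_mono) auto
    then have "x\<^sup>2 * (y\<^sup>2 + e\<^sup>2) \<le> y\<^sup>2 * (x\<^sup>2 + e\<^sup>2)"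
      using mult_right_mono[of "x\<^sup>2" "y\<^sup>2" "e\<^sup>2"] by (simp add: algebra_simps)
    then have "sqrt (x\<^sup>2 * (y\<^sup>2 + e\<^sup>2)) \<le> sqrt (y\<^sup>2 * (x\<^sup>2 + e\<^sup>2))"
      by (rule real_sqrt_le_mono)
    then have "x * smooth_abs e y \<le> y * smooth_abs e x"
      using that unfolding smooth_abs_def by (simp add: real_sqrt_mult)
    then show ?thesis using smooth_abs_pos[OF e] by (simp add: divide_le_eq le_divide_eq mult.commute)
  qed
  consider "0 \<le> x" | "x < 0" "0 \<le> y" | "y < 0" using assms(2) by linarith
  then show ?thesis
  proof cases
    case 1 then show ?thesis using nonneg assms(2) by blast
  next
    case 2 then show ?thesis using smooth_abs_pos[OF e, of x] smooth_abs_pos[OF e, of y]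
      by (smt (verit) divide_nonneg_pos divide_neg_pos)
  next
    case 3
    then have "-y / smooth_abs e (-y) \<le> -x / smooth_abs e (-x)" using assms(2) by (intro nonneg) auto
    then show ?thesis by (simp add: smooth_abs_def)
  qed
qed

definition tent :: "real \<Rightarrow> real \<Rightarrow> real" where
  "tent a s = \<bar>s\<bar> - \<bar>s - a\<bar> - s + a"

lemma tent_interpolation_error:
  assumes "0 \<le> a" "a \<le> 1"
  shows "tent a a - P2 (\<lambda>s. of_real (tent a s)) a = of_real (2 * a - a\<^sup>2 - a ^ 3)"
  using assms unfolding P2_eq tent_def
  by (simp add: field_simps power2_eq_square power3_eq_cube)

text \<open>The bound \<open>\<bar>g'\<bar> \<le> 1\<close> needs monotonicity of \<open>x / smooth_abs e x\<close>: since \<open>a \<ge> 0\<close>,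
  \<open>g' s = u s - u (s - a) - 1\<close> with \<open>-1 \<le> u (s - a) \<le> u s \<le> 1\<close>.\<close>

lemma smoothed_tent:
  assumes e: "e > 0" and a: "0 \<le> a"
  obtains g g' where "\<And>s. (g has_real_derivative g' s) (at s)" "continuous_on UNIV g'"
    "\<And>s. \<bar>g' s\<bar> \<le> 1" "\<And>s. \<bar>g s - tent a s\<bar> \<le> e"
proof
  let ?g' = "\<lambda>s. s / smooth_abs e s - (s - a) / smooth_abs e (s - a) - 1"
  show "((\<lambda>s. smooth_abs e s - smooth_abs e (s - a) - s + a) has_real_derivative ?g' s) (at s)" for s
    using e by (auto intro!: derivative_eq_intros)
  show "continuous_on UNIV ?g'"
    using smooth_abs_pos[OF e] unfolding smooth_abs_def
    by (intro continuous_intros) (auto simp: less_imp_neq[symmetric])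
  show "\<bar>?g' s\<bar> \<le> 1" for s
    using mono_divide_smooth_abs[OF e, of "s - a" s] a
      abs_divide_smooth_abs_le_1[OF e, of s] abs_divide_smooth_abs_le_1[OF e, of "s - a"]
    by linarith
  show "\<bar>smooth_abs e s - smooth_abs e (s - a) - s + a - tent a s\<bar> \<le> e" for s
    using smooth_abs_bounds[of e s] smooth_abs_bounds[of e "s - a"] e unfolding tent_def by linarith
qed

lemma sigma_nearly_attained:
  assumes e: "e > 0"
  obtains f f' where "C1_on_interval f f'" "sup_norm f' \<le> 1"
    "(14 * sqrt 7 - 20) / 27 - 4 * e \<le> sup_norm (\<lambda>t. f t - P2 f t)"
proof -
  define a where "a = (sqrt 7 - 1) / 3"
  have "2 < sqrt 7" "sqrt 7 < 4"
    using real_sqrt_less_mono[of 4 7] real_sqrt_less_mono[of 7 16] by auto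
  then have a: "0 \<le> a" "a \<le> 1" unfolding a_def by auto
  obtain g g' where g: "\<And>s. (g has_real_derivative g' s) (at s)" "continuous_on UNIV g'"
    "\<And>s. \<bar>g' s\<bar> \<le> 1" "\<And>s. \<bar>g s - tent a s\<bar> \<le> e"
    using smoothed_tent[OF e a(1)] by blast
  define f where "f s = complex_of_real (g s)" for s
  define f' where "f' s = complex_of_real (g' s)" for s
  define T where "T = (\<lambda>s. complex_of_real (tent a s))"
  have C1: "C1_on_interval f f'"
    unfolding C1_on_interval_def f_def[abs_def] f'_def[abs_def]
    using g(1,2) by (auto intro: has_vector_derivative_at_within has_vector_derivative_of_real
        continuous_on_of_real continuous_on_subset)
  have "(14 * sqrt 7 - 20) / 27 = 2 * a - a\<^sup>2 - a ^ 3"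
    using cubic_gap_eq[of a] unfolding a_def by simp
  also have "\<dots> \<le> norm (T a - P2 T a)"
    unfolding T_def tent_interpolation_error[OF a] norm_of_real by (rule abs_ge_self)
  also have "T a - P2 T a = (f a - P2 f a) + ((T a - f a) - P2 (\<lambda>s. T s - f s) a)"
    unfolding P2_diff by simp
  also have "norm \<dots> \<le> norm (f a - P2 f a) + norm ((T a - f a) - P2 (\<lambda>s. T s - f s) a)"
    by (rule norm_triangle_ineq)
  also have "norm ((T a - f a) - P2 (\<lambda>s. T s - f s) a) \<le> 4 * e"
  proof (rule norm_interpolation_error_le)
    show "norm (T s - f s) \<le> e" for s
      using g(4)[of s] unfolding T_def f_def by (simp flip: of_real_diff add: abs_minus_commute)
  qed (use a in auto)
  also have "norm (f a - P2 f a) \<le> sup_norm (\<lambda>t. f t - P2 f t)"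
    using a C1 by (intro sup_norm_upper continuous_on_diff continuous_on_P2 C1_on_interval_continuous) auto
  finally have "(14 * sqrt 7 - 20) / 27 - 4 * e \<le> sup_norm (\<lambda>t. f t - P2 f t)" by linarith
  moreover have "sup_norm f' \<le> 1"
    using g(3) by (intro sup_norm_le) (simp add: f'_def)
  ultimately show ?thesis using C1 that by blast
qed

theorem theoremB5:
  defines "S \<equiv> {\<sigma>::real. \<forall>f f'. C1_on_interval f f' \<longrightarrow>
            sup_norm (\<lambda>t. f t - P2 f t) \<le> \<sigma> * sup_norm f'}"
  shows "(14 * sqrt 7 - 20) / 27 \<in> S \<and> (\<forall>\<sigma>\<in>S. (14 * sqrt 7 - 20) / 27 \<le> \<sigma>)"
proof
  show "(14 * sqrt 7 - 20) / 27 \<in> S"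
    unfolding S_def
  proof (intro CollectI allI impI)
    fix f f' assume f: "C1_on_interval f f'"
    then have "\<And>s. s \<in> {-1..1} \<Longrightarrow> norm (f' s) \<le> sup_norm f'"
      by (intro sup_norm_upper) (auto simp: C1_on_interval_def)
    then show "sup_norm (\<lambda>t. f t - P2 f t) \<le> (14 * sqrt 7 - 20) / 27 * sup_norm f'"
      by (intro sup_norm_le P2_error_bound[OF f])
  qed
  show "\<forall>\<sigma>\<in>S. (14 * sqrt 7 - 20) / 27 \<le> \<sigma>"
  proof
    fix \<sigma> assume \<sigma>: "\<sigma> \<in> S"
    have "(14 * sqrt 7 - 20) / 27 \<le> max \<sigma> 0"
    proof (rule field_le_epsilon)
      fix \<epsilon> :: real assume "0 < \<epsilon>"
      then obtain f f' where f: "C1_on_interval f f'" "sup_norm f' \<le> 1"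
        "(14 * sqrt 7 - 20) / 27 - \<epsilon> \<le> sup_norm (\<lambda>t. f t - P2 f t)"
        using sigma_nearly_attained[of "\<epsilon> / 4"] by auto
      have "0 \<le> sup_norm f'"
        using f(1) order_trans[OF norm_ge_zero sup_norm_upper[of f' 0]]
        by (auto simp: C1_on_interval_def)
      have "sup_norm (\<lambda>t. f t - P2 f t) \<le> \<sigma> * sup_norm f'"
        using \<sigma> f(1) unfolding S_def by blast
      also have "\<dots> \<le> max \<sigma> 0"
        using mult_left_le[OF f(2), of \<sigma>] mult_nonpos_nonneg[of \<sigma> "sup_norm f'"] \<open>0 \<le> sup_norm f'\<close>
        by (auto simp: max_def)
      finally show "(14 * sqrt 7 - 20) / 27 \<le> max \<sigma> 0 + \<epsilon>" using f(3) by linarith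
    qed
    moreover have "0 < (14 * sqrt 7 - 20) / 27"
      using real_sqrt_less_mono[of 4 7] by simp
    ultimately show "(14 * sqrt 7 - 20) / 27 \<le> \<sigma>" by linarith
  qed
qed

end
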